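(* Let pieces have length $a=2$ and let $m\geq 1$. There is a bijective correspondence between positive $(2m,m)$-strings and right $0$-pyramids of size $m$.
   Context: A string is a finite sequence of $0$'s and $1$'s; an $(n,m)$-string is a string of length $n$ containing exactly $m$ $1$'s. A $(2m,m)$-string $x_1x_2\dots x_{2m}$ is positive if $t_s=\sum_{u=1}^s(2x_u-1)\geq 0$ for all $s=1,\dots,2m$. A piece is an open interval $]s,s+2[$ with $s\in\mathbb Z$; two pieces are concurrent iff their intervals intersect. A heap is a finite configuration obtained by successively dropping pieces vertically towards the horizontal axis, each coming to rest on the axis or on the highest previously placed piece whose interval meets its own (configurations, not dropping orders, are counted). A pyramid is a heap with a unique bottom piece (exactly one piece on the axis); its size is its number of pieces. A right $0$-pyramid is a pyramid whose bottom piece covers $]0,2[$ and is a leftmost piece (no piece covers $]t,t+2[$ with $t<0$). *)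

theory Defs
  imports Main
begin

(* A string x_1...x_n is a bool list; True encodes 1, False encodes 0. *)

definition nm_string :: "nat \<Rightarrow> nat \<Rightarrow> bool list \<Rightarrow> bool" where
  "nm_string n m xs \<longleftrightarrow> length xs = n \<and> length (filter id xs) = m"

definition walk :: "bool list \<Rightarrow> nat \<Rightarrow> int" where
  "walk xs s = (\<Sum>u<s. if xs ! u then 1 else -1)"

definition positive_string :: "nat \<Rightarrow> bool list \<Rightarrow> bool" where
  "positive_string m xs \<longleftrightarrow> nm_string (2*m) m xs \<and> (\<forall>s\<in>{1..2*m}. walk xs s \<ge> 0)"

(* A placed piece (s, h): the piece ]s, s+2[ resting at level h (h = 0: on the axis). *)
type_synonym piece = "int \<times> nat"

(* pieces ]s,s+2[ and ]t,t+2[ are concurrent iff the open intervals meet *)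
definition concurrent :: "int \<Rightarrow> int \<Rightarrow> bool" where
  "concurrent s t \<longleftrightarrow> \<bar>s - t\<bar> < 2"

definition drop_level :: "piece set \<Rightarrow> int \<Rightarrow> nat" where
  "drop_level H s =
     (if \<exists>(t,h)\<in>H. concurrent s t
      then Suc (Max {h. \<exists>t. (t,h) \<in> H \<and> concurrent s t})
      else 0)"

inductive heap :: "piece set \<Rightarrow> bool" where
  heap_empty: "heap {}"
| heap_drop: "heap H \<Longrightarrow> heap (insert (s, drop_level H s) H)"

definition pyramid :: "piece set \<Rightarrow> bool" where
  "pyramid H \<longleftrightarrow> heap H \<and> card {p \<in> H. snd p = 0} = 1"

definition right_0_pyramid :: "piece set \<Rightarrow> bool" where
  "right_0_pyramid H \<longleftrightarrow> pyramid H \<and> (0, 0) \<in> H \<and> (\<forall>(t,h)\<in>H. t \<ge> 0)"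

end

theory Submission
  imports Defs
begin

text \<open>Both sides are in bijection with the admissible sequences \<open>x\<^sub>1, \<dots>, x\<^sub>m\<close> of
naturals, where \<open>x\<^sub>1 = 0\<close> and \<open>x\<^sub>k\<^sub>+\<^sub>1 \<le> x\<^sub>k + 1\<close>.
A positive string is the lattice path whose \<open>k\<close>-th up-step starts at height \<open>x\<^sub>k\<close>;
a right \<open>0\<close>-pyramid is the heap obtained by dropping pieces at the positions \<open>x\<^sub>1, \<dots>, x\<^sub>m\<close>.
Conversely a pyramid is dismantled by always removing the leftmost of its top pieces (those
with no concurrent piece above them): what remains is again a right \<open>0\<close>-pyramid, and its own
leftmost top piece lies at most one unit to the left of the removed one, which gives the
admissibility condition. Sequences are stored latest entry first.\<close>

definition height :: "bool list \<Rightarrow> int" where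
  "height xs = (\<Sum>b\<leftarrow>xs. if b then 1 else -1)"

lemma height_simps [simp]:
  "height [] = 0"
  "height (b # xs) = (if b then 1 else -1) + height xs"
  "height (xs @ ys) = height xs + height ys"
  by (simp_all add: height_def)

lemma height_replicate_False [simp]: "height (replicate n False) = - int n"
  by (induction n) auto

lemma height_eq_count: "height xs = 2 * int (length (filter id xs)) - int (length xs)"
  by (induction xs) auto

lemma walk_eq_height_take: "s \<le> length xs \<Longrightarrow> walk xs s = height (take s xs)"
proof (induction s)
  case 0
  then show ?case by (simp add: walk_def)
next
  case (Suc s)
  then have "take (Suc s) xs = take s xs @ [xs ! s]"
    by (simp add: take_Suc_conv_app_nth)
  with Suc show ?case by (simp add: walk_def)
qed

definition prefix_nonneg :: "bool list \<Rightarrow> bool" where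
  "prefix_nonneg xs \<longleftrightarrow> (\<forall>k\<le>length xs. 0 \<le> height (take k xs))"

lemma prefix_nonneg_height: "prefix_nonneg xs \<Longrightarrow> 0 \<le> height xs"
  unfolding prefix_nonneg_def by (metis order_refl take_all)

lemma prefix_nonneg_append:
  "prefix_nonneg (xs @ ys) \<longleftrightarrow>
     prefix_nonneg xs \<and> (\<forall>k\<le>length ys. 0 \<le> height xs + height (take k ys))"
proof
  assume A: "prefix_nonneg (xs @ ys)"
  have "0 \<le> height (take k xs)" if "k \<le> length xs" for k
  proof -
    have "0 \<le> height (take k (xs @ ys))"
      using A that unfolding prefix_nonneg_def by (metis le_add1 length_append order_trans)
    with that show ?thesis by simp
  qed
  moreover have "0 \<le> height xs + height (take k ys)" if "k \<le> length ys" for k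
  proof -
    have "0 \<le> height (take (length xs + k) (xs @ ys))"
      using A that unfolding prefix_nonneg_def by (metis add_le_cancel_left length_append)
    then show ?thesis by simp
  qed
  ultimately show "prefix_nonneg xs \<and> (\<forall>k\<le>length ys. 0 \<le> height xs + height (take k ys))"
    unfolding prefix_nonneg_def by blast
next
  assume A: "prefix_nonneg xs \<and> (\<forall>k\<le>length ys. 0 \<le> height xs + height (take k ys))"
  show "prefix_nonneg (xs @ ys)"
    unfolding prefix_nonneg_def
  proof (intro allI impI)
    fix k
    assume "k \<le> length (xs @ ys)"
    then show "0 \<le> height (take k (xs @ ys))"
      using A unfolding prefix_nonneg_def by (cases "k \<le> length xs") auto
  qed
qed

lemma prefix_nonneg_append_peak:
  assumes "prefix_nonneg xs" and "int n \<le> height xs + 1"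
  shows "prefix_nonneg (xs @ True # replicate n False)"
  unfolding prefix_nonneg_append
proof (intro conjI allI impI)
  fix k
  assume "k \<le> length (True # replicate n False)"
  then show "0 \<le> height xs + height (take k (True # replicate n False))"
    using assms prefix_nonneg_height by (cases k) auto
qed (fact assms(1))

lemma prefix_nonneg_append_descent:
  "prefix_nonneg xs \<Longrightarrow> int n \<le> height xs \<Longrightarrow> prefix_nonneg (xs @ replicate n False)"
  unfolding prefix_nonneg_append by auto

lemma positive_string_iff:
  "positive_string m xs \<longleftrightarrow> length xs = 2 * m \<and> prefix_nonneg xs \<and> height xs = 0"
proof
  assume A: "positive_string m xs"
  then have len: "length xs = 2 * m" and ones: "length (filter id xs) = m"
    by (auto simp: positive_string_def nm_string_def)
  have "0 \<le> height (take k xs)" if k: "k \<le> length xs" for k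
  proof (cases "k = 0")
    case False
    with k len A have "walk xs k \<ge> 0" by (simp add: positive_string_def)
    with walk_eq_height_take[OF k] show ?thesis by simp
  qed simp
  with len ones height_eq_count[of xs]
  show "length xs = 2 * m \<and> prefix_nonneg xs \<and> height xs = 0"
    by (simp add: prefix_nonneg_def)
next
  assume A: "length xs = 2 * m \<and> prefix_nonneg xs \<and> height xs = 0"
  then have "walk xs s \<ge> 0" if "s \<le> 2 * m" for s
    using that walk_eq_height_take[of s xs] by (simp add: prefix_nonneg_def)
  with A height_eq_count[of xs] show "positive_string m xs"
    by (simp add: positive_string_def nm_string_def)
qed

lemma split_at_last_True:
  assumes "True \<in> set xs"
  obtains ys n where "xs = ys @ True # replicate n False"
proof -
  obtain ys zs where "xs = ys @ True # zs" and "True \<notin> set zs"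
    using split_list_last[OF assms] by blast
  moreover have "zs = replicate (length zs) False"
    using \<open>True \<notin> set zs\<close> by (intro replicate_eqI) auto
  ultimately show thesis using that by metis
qed

lemma append_True_replicate_False_eq:
  assumes "xs @ True # replicate a False = ys @ True # replicate b False"
  shows "a = b \<and> xs = ys"
proof -
  have "replicate a False @ True # rev xs = replicate b False @ True # rev ys"
    using arg_cong[OF assms, of rev] by simp
  then have "a = b \<and> rev xs = rev ys"
  proof (induction a arbitrary: b)
    case 0
    then show ?case by (cases b) auto
  next
    case (Suc a)
    then show ?case by (cases b) auto
  qed
  then show ?thesis by simp
qed

fun admissible :: "nat list \<Rightarrow> bool" where
  "admissible [] \<longleftrightarrow> False"
| "admissible [x] \<longleftrightarrow> x = 0"
| "admissible (x # y # r) \<longleftrightarrow> x \<le> Suc y \<and> admissible (y # r)"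

lemma admissible_tl: "admissible (x # r) \<Longrightarrow> r \<noteq> [] \<Longrightarrow> admissible r"
  by (cases r) auto

lemma admissible_below_head: "admissible (x # r) \<Longrightarrow> z \<le> x \<Longrightarrow> z \<in> set (x # r)"
proof (induction r arbitrary: x)
  case (Cons y r)
  then show ?case by (cases "z = x") auto
qed simp

fun dyck_of :: "nat list \<Rightarrow> bool list" where
  "dyck_of [] = []"
| "dyck_of (x # r) = take (length (dyck_of r) - x) (dyck_of r) @ True # replicate (Suc x) False"

lemma dyck_of_shape:
  assumes "admissible (x # r)"
  shows "\<exists>ys. dyck_of (x # r) = ys @ True # replicate (Suc x) False
           \<and> prefix_nonneg ys \<and> height ys = int x \<and> length ys + x = 2 * length r"
  using assms
proof (induction r arbitrary: x)
  case Nil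
  then show ?case by (simp add: prefix_nonneg_def)
next
  case (Cons y r)
  then have xy: "x \<le> Suc y" and "admissible (y # r)" by auto
  then obtain ys where ys: "dyck_of (y # r) = ys @ True # replicate (Suc y) False"
    and nonneg: "prefix_nonneg ys" and ht: "height ys = int y"
    and len: "length ys + y = 2 * length r"
    using Cons.IH by blast
  define zs where "zs = ys @ True # replicate (Suc y - x) False"
  have "dyck_of (y # r) = zs @ replicate x False"
    using ys xy by (simp add: zs_def flip: replicate_add)
  then have "dyck_of (x # y # r) = zs @ True # replicate (Suc x) False"
    by (simp del: dyck_of.simps(2) add: dyck_of.simps(2)[of x])
  moreover have "prefix_nonneg zs"
    unfolding zs_def using nonneg ht xy by (intro prefix_nonneg_append_peak) auto
  moreover have "height zs = int x" and "length zs + x = 2 * length (y # r)"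
    using ht len xy by (auto simp: zs_def)
  ultimately show ?case by blast
qed

lemma length_dyck_of: "admissible b \<Longrightarrow> length (dyck_of b) = 2 * length b"
  by (cases b) (auto dest!: dyck_of_shape)

lemma dyck_of_positive:
  assumes "admissible b"
  shows "positive_string (length b) (dyck_of b)"
proof -
  obtain x r where b: "b = x # r" using assms by (cases b) auto
  then obtain ys where "dyck_of b = ys @ True # replicate (Suc x) False"
    and "prefix_nonneg ys" and "height ys = int x"
    using dyck_of_shape assms by blast
  moreover from this have "prefix_nonneg (ys @ True # replicate (Suc x) False)"
    by (intro prefix_nonneg_append_peak) auto
  ultimately show ?thesis
    using length_dyck_of[OF assms] by (simp add: positive_string_iff del: replicate_Suc)
qed

lemma dyck_of_ends_with_descent:
  assumes "admissible (x # r)" and "r \<noteq> []"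
  shows "dyck_of r = take (length (dyck_of r) - x) (dyck_of r) @ replicate x False"
proof -
  obtain y r' where r: "r = y # r'" using assms(2) by (cases r) auto
  with assms have "x \<le> Suc y" and "admissible r" by auto
  moreover obtain ys where "dyck_of r = ys @ True # replicate (Suc y) False"
    using dyck_of_shape \<open>admissible r\<close> r by blast
  ultimately have "dyck_of r = (ys @ True # replicate (Suc y - x) False) @ replicate x False"
    by (simp flip: replicate_add)
  moreover from this
  have "take (length (dyck_of r) - x) (dyck_of r) = ys @ True # replicate (Suc y - x) False"
    by (metis append_eq_conv_conj length_append length_replicate add_diff_cancel_right')
  ultimately show ?thesis by simp
qed

lemma inj_on_dyck_of: "inj_on dyck_of {b. admissible b}"
proof (rule inj_onI, simp)
  fix b b'
  assume "admissible b" "admissible b'" "dyck_of b = dyck_of b'"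
  then show "b = b'"
  proof (induction b arbitrary: b')
    case (Cons x r)
    obtain x' r' where b': "b' = x' # r'" using Cons.prems(2) by (cases b') auto
    have "take (length (dyck_of r) - x) (dyck_of r) @ True # replicate (Suc x) False
        = take (length (dyck_of r') - x') (dyck_of r') @ True # replicate (Suc x') False"
      using Cons.prems(3) b' by (simp only: dyck_of.simps)
    then have "Suc x = Suc x'"
      and prefix: "take (length (dyck_of r) - x) (dyck_of r)
                 = take (length (dyck_of r') - x') (dyck_of r')"
      by (blast dest: append_True_replicate_False_eq)+
    then have "x = x'" by simp
    have "2 * length (x # r) = 2 * length b'"
      using Cons.prems length_dyck_of by metis
    then have "length r = length r'" using b' by simp
    show ?case
    proof (cases "r = []")
      case False
      then have "r' \<noteq> []" using \<open>length r = length r'\<close> by auto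
      have "dyck_of r = take (length (dyck_of r) - x) (dyck_of r) @ replicate x False"
        using dyck_of_ends_with_descent[OF Cons.prems(1) False] .
      also have "\<dots> = take (length (dyck_of r') - x') (dyck_of r') @ replicate x' False"
        using prefix \<open>x = x'\<close> by simp
      also have "\<dots> = dyck_of r'"
        using Cons.prems(2) b' \<open>r' \<noteq> []\<close> by (intro dyck_of_ends_with_descent[symmetric]) simp_all
      finally have "dyck_of r = dyck_of r'" .
      then have "r = r'"
        using Cons.IH admissible_tl Cons.prems(1,2) b' False \<open>r' \<noteq> []\<close> by blast
      then show ?thesis using \<open>x = x'\<close> b' by simp
    qed (use \<open>length r = length r'\<close> \<open>x = x'\<close> b' in simp)
  qed simp
qed

lemma dyck_of_surj:
  assumes "m \<ge> 1" and "length xs = 2 * m" and "prefix_nonneg xs" and "height xs = 0"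
  shows "\<exists>b. admissible b \<and> length b = m \<and> dyck_of b = xs"
  using assms
proof (induction m arbitrary: xs)
  case (Suc m)
  have "filter id xs \<noteq> []"
    using Suc.prems height_eq_count[of xs] by auto
  then have "True \<in> set xs"
    by (metis (full_types) filter_empty_conv id_apply)
  then obtain ys n where xs: "xs = ys @ True # replicate n False"
    by (rule split_at_last_True)
  have ys: "prefix_nonneg ys" using Suc.prems(3) xs prefix_nonneg_append by blast
  define x where "x = nat (height ys)"
  have ht: "height ys = int x" using prefix_nonneg_height[OF ys] x_def by simp
  have n: "n = Suc x" using Suc.prems(4) xs ht by simp
  show ?case
  proof (cases "m = 0")
    case True
    then have "ys = []" using Suc.prems(2) xs n by simp
    with ht xs n True show ?thesis by (intro exI[of _ "[0]"]) simp
  next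
    case False
    define xs' where "xs' = ys @ replicate x False"
    have "length xs' = 2 * m" and "prefix_nonneg xs'" and "height xs' = 0"
      using Suc.prems(2) xs n ht ys prefix_nonneg_append_descent by (auto simp: xs'_def)
    then obtain b where b: "admissible b" "length b = m" "dyck_of b = xs'"
      using Suc.IH False by fastforce
    then obtain y r where br: "b = y # r" using False by (cases b) auto
    have "x \<le> Suc y"
    proof (rule ccontr)
      assume "\<not> x \<le> Suc y"
      have "rev xs'
          = replicate (Suc y) False @ True # rev (take (length (dyck_of r) - y) (dyck_of r))"
        using b(3)[symmetric] br by (simp del: replicate_Suc)
      moreover have "rev xs' ! Suc y = False"
        using \<open>\<not> x \<le> Suc y\<close> by (simp add: xs'_def nth_append)
      ultimately show False by (simp add: nth_append)
    qed
    then have "admissible (x # b)" using b br by simp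
    moreover have "dyck_of (x # b) = xs" using b(3) xs n by (simp add: xs'_def)
    ultimately show ?thesis using b by (intro exI[of _ "x # b"]) simp
  qed
qed simp

lemma bij_betw_dyck_of:
  assumes "m \<ge> 1"
  shows "bij_betw dyck_of {b. admissible b \<and> length b = m} {xs. positive_string m xs}"
proof (rule bij_betw_imageI)
  show "inj_on dyck_of {b. admissible b \<and> length b = m}"
    using inj_on_dyck_of by (rule inj_on_subset) blast
  show "dyck_of ` {b. admissible b \<and> length b = m} = {xs. positive_string m xs}"
    using dyck_of_positive dyck_of_surj[OF assms] by (auto simp: positive_string_iff)
qed

lemma concurrent_sym: "concurrent s t \<longleftrightarrow> concurrent t s"
  by (auto simp: concurrent_def)

lemma concurrent_refl [simp]: "concurrent s s"
  by (simp add: concurrent_def)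

lemma finite_levels_concurrent: "finite H \<Longrightarrow> finite {h. \<exists>t. (t, h) \<in> H \<and> concurrent s t}"
  by (rule finite_subset[of _ "snd ` H"]) force+

lemma drop_level_empty [simp]: "drop_level {} s = 0"
  by (simp add: drop_level_def)

lemma drop_level_gt:
  assumes "finite H" and "(t, h) \<in> H" and "concurrent s t"
  shows "h < drop_level H s"
proof -
  let ?L = "{h. \<exists>t. (t, h) \<in> H \<and> concurrent s t}"
  have "h \<in> ?L" using assms(2,3) by blast
  then have "h \<le> Max ?L" using finite_levels_concurrent[OF assms(1)] by (rule Max_ge[rotated])
  moreover have "\<exists>(t, h)\<in>H. concurrent s t" using assms(2,3) by blast
  ultimately show ?thesis by (simp add: drop_level_def)
qed

lemma drop_level_supported:
  assumes "finite H" and "0 < drop_level H s"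
  shows "\<exists>t. (t, drop_level H s - 1) \<in> H \<and> concurrent s t"
proof -
  let ?L = "{h. \<exists>t. (t, h) \<in> H \<and> concurrent s t}"
  have ex: "\<exists>(t, h)\<in>H. concurrent s t"
    using assms(2) by (simp add: drop_level_def split: if_splits)
  then have "?L \<noteq> {}" by blast
  then have "Max ?L \<in> ?L" using finite_levels_concurrent[OF assms(1)] by (rule Max_in[rotated])
  moreover have "drop_level H s = Suc (Max ?L)" using ex by (simp add: drop_level_def)
  ultimately show ?thesis by simp
qed

lemma drop_level_eqI:
  assumes "finite H" and "(t, l) \<in> H" and "concurrent s t"
    and "\<And>t h. (t, h) \<in> H \<Longrightarrow> concurrent s t \<Longrightarrow> h \<le> l"
  shows "drop_level H s = Suc l"
proof -
  let ?L = "{h. \<exists>t. (t, h) \<in> H \<and> concurrent s t}"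
  have "Max ?L = l"
  proof (rule Max_eqI)
    show "finite ?L" using assms(1) by (rule finite_levels_concurrent)
    show "l \<in> ?L" using assms(2,3) by blast
  qed (use assms(4) in blast)
  moreover have "\<exists>(t, h)\<in>H. concurrent s t" using assms(2,3) by blast
  ultimately show ?thesis by (simp add: drop_level_def)
qed

lemma dropped_notin: "finite H \<Longrightarrow> (s, drop_level H s) \<notin> H"
  using drop_level_gt[of H s "drop_level H s" s] by auto

text \<open>Unlike \<open>heap\<close>, which is defined by dropping pieces, this invariant of heaps is visibly
preserved when a top piece is removed.\<close>

definition stacked :: "piece set \<Rightarrow> bool" where
  "stacked H \<longleftrightarrow> finite H
     \<and> (\<forall>s h. (s, h) \<in> H \<longrightarrow> 0 < h \<longrightarrow> (\<exists>t. (t, h - 1) \<in> H \<and> concurrent s t))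
     \<and> (\<forall>s t h. (s, h) \<in> H \<longrightarrow> (t, h) \<in> H \<longrightarrow> s \<noteq> t \<longrightarrow> \<not> concurrent s t)"

lemma heap_stacked: "heap H \<Longrightarrow> stacked H"
proof (induction rule: heap.induct)
  case heap_empty
  then show ?case by (simp add: stacked_def)
next
  case (heap_drop H s)
  let ?p = "(s, drop_level H s)"
  have fin: "finite H" using heap_drop.IH by (simp add: stacked_def)
  have "\<exists>t. (t, h - 1) \<in> insert ?p H \<and> concurrent u t"
    if "(u, h) \<in> insert ?p H" and "0 < h" for u h
  proof (cases "(u, h) = ?p")
    case True
    with that drop_level_supported[OF fin, of s] show ?thesis by auto
  next
    case False
    with that heap_drop.IH show ?thesis unfolding stacked_def by blast
  qed
  moreover have "\<not> concurrent u t"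
    if "(u, h) \<in> insert ?p H" and "(t, h) \<in> insert ?p H" and "u \<noteq> t" for u t h
  proof -
    have "(u, h) \<in> H \<Longrightarrow> (t, h) \<in> H \<Longrightarrow> ?thesis"
      using heap_drop.IH that(3) unfolding stacked_def by blast
    moreover have "\<not> concurrent s v" and "\<not> concurrent v s" if "(v, drop_level H s) \<in> H" for v
      using drop_level_gt[OF fin that] concurrent_sym by auto
    ultimately show ?thesis using that by auto
  qed
  ultimately show ?case using fin unfolding stacked_def by blast
qed

lemma stacked_level_below:
  assumes "stacked H" and "(s, h) \<in> H" and "h' \<le> h"
  shows "\<exists>t. (t, h') \<in> H"
  using assms(2,3)
proof (induction h arbitrary: s)
  case (Suc h)
  show ?case
  proof (cases "h' = Suc h")
    case False
    obtain t where "(t, h) \<in> H" using Suc.prems assms(1) unfolding stacked_def by fastforce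
    with Suc.IH Suc.prems(2) False show ?thesis by simp
  qed (use Suc.prems in blast)
qed auto

definition top_piece :: "piece set \<Rightarrow> piece \<Rightarrow> bool" where
  "top_piece H p \<longleftrightarrow> p \<in> H \<and> (\<forall>q\<in>H. concurrent (fst p) (fst q) \<longrightarrow> snd q \<le> snd p)"

definition leftmost_top :: "piece set \<Rightarrow> int" where
  "leftmost_top H = Min (fst ` Collect (top_piece H))"

lemma finite_top_positions: "finite H \<Longrightarrow> finite (fst ` Collect (top_piece H))"
  by (rule finite_imageI, rule finite_subset[of _ H]) (auto simp: top_piece_def)

lemma ex_top_piece: "finite H \<Longrightarrow> H \<noteq> {} \<Longrightarrow> \<exists>p. top_piece H p"
proof -
  assume "finite H" "H \<noteq> {}"
  then have "Max (snd ` H) \<in> snd ` H" by simp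
  then obtain p where "p \<in> H" and "snd p = Max (snd ` H)" by auto
  with \<open>finite H\<close> have "top_piece H p" unfolding top_piece_def by simp
  then show ?thesis ..
qed

lemma leftmost_top_le: "finite H \<Longrightarrow> top_piece H p \<Longrightarrow> leftmost_top H \<le> fst p"
  unfolding leftmost_top_def by (rule Min_le[OF finite_top_positions]) auto

lemma leftmost_top_attained:
  assumes "finite H" and "H \<noteq> {}"
  obtains p where "top_piece H p" and "fst p = leftmost_top H"
proof -
  have "fst ` Collect (top_piece H) \<noteq> {}" using ex_top_piece[OF assms] by blast
  then have "leftmost_top H \<in> fst ` Collect (top_piece H)"
    unfolding leftmost_top_def using finite_top_positions[OF assms(1)] by (rule Min_in[rotated])
  then show thesis using that by auto
qed

lemma leftmost_top_eqI:
  "finite H \<Longrightarrow> top_piece H p \<Longrightarrow> (\<And>q. top_piece H q \<Longrightarrow> fst p \<le> fst q) \<Longrightarrow> leftmost_top H = fst p"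
  unfolding leftmost_top_def using finite_top_positions by (intro Min_eqI) auto

lemma top_piece_dropped:
  assumes "finite H"
  shows "top_piece (insert (s, drop_level H s) H) (s, drop_level H s)"
  using drop_level_gt[OF assms] by (fastforce simp: top_piece_def)

fun pyramid_of :: "nat list \<Rightarrow> piece set" where
  "pyramid_of [] = {}"
| "pyramid_of (x # r) = insert (int x, drop_level (pyramid_of r) (int x)) (pyramid_of r)"

lemma finite_pyramid_of [simp]: "finite (pyramid_of b)"
  by (induction b) auto

lemma positions_pyramid_of: "fst ` pyramid_of b = int ` set b"
  by (induction b) auto

lemma heap_pyramid_of: "heap (pyramid_of b)"
  by (induction b) (auto intro: heap.intros)

lemma card_pyramid_of: "card (pyramid_of b) = length b"
  by (induction b) (simp_all add: dropped_notin)

lemma top_piece_insert_dropped: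
  assumes "finite H" and "top_piece (insert (s, drop_level H s) H) q" and "q \<noteq> (s, drop_level H s)"
  shows "top_piece H q" and "\<not> concurrent s (fst q)"
proof -
  from assms(2,3) have "q \<in> H" by (simp add: top_piece_def)
  with assms(2) show "top_piece H q" by (simp add: top_piece_def)
  show "\<not> concurrent s (fst q)"
  proof
    assume "concurrent s (fst q)"
    then have "snd q < drop_level H s"
      using drop_level_gt[OF assms(1), of "fst q" "snd q"] \<open>q \<in> H\<close> by simp
    moreover have "drop_level H s \<le> snd q"
      using assms(2) \<open>concurrent s (fst q)\<close> by (auto simp: top_piece_def concurrent_sym)
    ultimately show False by simp
  qed
qed

lemma drop_level_pyramid_of_pos:
  assumes "admissible (y # r)" and "x \<le> Suc y"
  shows "0 < drop_level (pyramid_of (y # r)) (int x)"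
proof -
  have "x - 1 \<in> set (y # r)" using assms by (intro admissible_below_head) auto
  then have "int (x - 1) \<in> fst ` pyramid_of (y # r)"
    unfolding positions_pyramid_of by (rule imageI)
  then obtain h where h: "(int (x - 1), h) \<in> pyramid_of (y # r)" by force
  have "concurrent (int x) (int (x - 1))" by (auto simp: concurrent_def)
  with h have "h < drop_level (pyramid_of (y # r)) (int x)"
    by (intro drop_level_gt) simp_all
  then show ?thesis by simp
qed

lemma ground_pyramid_of: "admissible b \<Longrightarrow> {p \<in> pyramid_of b. snd p = 0} = {(0, 0)}"
proof (induction b rule: admissible.induct)
  case (2 x)
  then show ?case by auto
next
  case (3 x y r)
  let ?H = "pyramid_of (y # r)"
  have "0 < drop_level ?H (int x)"
    using 3 by (intro drop_level_pyramid_of_pos) auto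
  then have "{p \<in> pyramid_of (x # y # r). snd p = 0} = {p \<in> ?H. snd p = 0}"
    by (subst pyramid_of.simps(2)) auto
  with 3 show ?case by simp
qed simp

lemma leftmost_top_pyramid_of: "admissible b \<Longrightarrow> leftmost_top (pyramid_of b) = int (hd b)"
proof (induction b rule: admissible.induct)
  case (2 x)
  then have "pyramid_of [x] = {(0, 0)}" by simp
  moreover have "leftmost_top {(0, 0)} = fst (0::int, 0::nat)"
    by (rule leftmost_top_eqI) (auto simp: top_piece_def)
  ultimately show ?case using 2 by simp
next
  case (3 x y r)
  let ?H = "pyramid_of (y # r)"
  let ?p = "(int x, drop_level ?H (int x))"
  have lm: "leftmost_top ?H = int y" and "x \<le> Suc y" using 3 by auto
  have "int x \<le> fst q" if q: "top_piece (insert ?p ?H) q" for q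
  proof (cases "q = ?p")
    case False
    then have "top_piece ?H q" and "\<not> concurrent (int x) (fst q)"
      using top_piece_insert_dropped[OF finite_pyramid_of q] by auto
    moreover from this have "int y \<le> fst q"
      using leftmost_top_le[OF finite_pyramid_of] lm by metis
    ultimately show ?thesis using \<open>x \<le> Suc y\<close> by (auto simp: concurrent_def)
  qed simp
  then have "leftmost_top (insert ?p ?H) = fst ?p"
    by (intro leftmost_top_eqI top_piece_dropped) simp_all
  then show ?case by (simp only: pyramid_of.simps(2)) simp
qed simp

lemma right_0_pyramid_pyramid_of:
  assumes "admissible b"
  shows "right_0_pyramid (pyramid_of b)"
proof -
  have ground: "{p \<in> pyramid_of b. snd p = 0} = {(0, 0)}"
    using ground_pyramid_of[OF assms] .
  then have "(0, 0) \<in> pyramid_of b" by blast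
  moreover have "t \<ge> 0" if "(t, h) \<in> pyramid_of b" for t h
  proof -
    have "t \<in> fst ` pyramid_of b" using that by force
    then show ?thesis by (auto simp: positions_pyramid_of)
  qed
  ultimately show ?thesis
    using ground heap_pyramid_of by (auto simp: right_0_pyramid_def pyramid_def)
qed

lemma highest_at_dropped:
  assumes "finite H"
  shows "Max {h. (s, h) \<in> insert (s, drop_level H s) H} = drop_level H s"
proof -
  have "{h. (s, h) \<in> insert (s, drop_level H s) H} = insert (drop_level H s) {h. (s, h) \<in> H}"
    by auto
  moreover have "finite {h. (s, h) \<in> H}"
    using finite_imageI[OF assms, of snd] by (rule finite_subset[rotated]) force
  moreover have "h < drop_level H s" if "(s, h) \<in> H" for h
    using drop_level_gt[OF assms that] by simp
  ultimately show ?thesis by (intro Max_eqI) (auto intro: less_imp_le)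
qed

lemma pyramid_of_tl:
  "pyramid_of r = pyramid_of (x # r) - {(int x, Max {h. (int x, h) \<in> pyramid_of (x # r)})}"
proof -
  let ?p = "(int x, drop_level (pyramid_of r) (int x))"
  have "Max {h. (int x, h) \<in> pyramid_of (x # r)} = snd ?p"
    unfolding pyramid_of.simps(2) snd_conv by (rule highest_at_dropped[OF finite_pyramid_of])
  moreover have "?p \<notin> pyramid_of r" by (simp add: dropped_notin)
  ultimately show ?thesis by simp
qed

lemma inj_on_pyramid_of: "inj_on pyramid_of {b. admissible b}"
proof (rule inj_onI, simp)
  fix b b'
  assume "admissible b" "admissible b'" "pyramid_of b = pyramid_of b'"
  then show "b = b'"
  proof (induction b arbitrary: b')
    case (Cons x r)
    obtain x' r' where b': "b' = x' # r'" using Cons.prems(2) by (cases b') auto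
    have "int x = int x'"
      using leftmost_top_pyramid_of[OF Cons.prems(1)] leftmost_top_pyramid_of[OF Cons.prems(2)]
        Cons.prems(3) b' by simp
    then have "x = x'" by simp
    have "pyramid_of r = pyramid_of r'"
      by (subst (1 2) pyramid_of_tl[where x = x]) (use Cons.prems(3) b' \<open>x = x'\<close> in simp)
    then have "length r = length r'" by (metis card_pyramid_of)
    show ?case
    proof (cases "r = []")
      case False
      then have "r' \<noteq> []" using \<open>length r = length r'\<close> by auto
      then have "r = r'"
        using Cons.IH admissible_tl Cons.prems(1,2) b' False \<open>pyramid_of r = pyramid_of r'\<close> by blast
      then show ?thesis using \<open>x = x'\<close> b' by simp
    qed (use \<open>length r = length r'\<close> \<open>x = x'\<close> b' in simp)
  qed simp
qed

lemma stacked_remove_top: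
  assumes "stacked H" and "top_piece H p"
  shows "stacked (H - {p})"
proof -
  have "\<exists>t. (t, h - 1) \<in> H - {p} \<and> concurrent s t" if sh: "(s, h) \<in> H - {p}" and "0 < h" for s h
  proof -
    obtain t where t: "(t, h - 1) \<in> H" "concurrent s t"
      using assms(1) sh \<open>0 < h\<close> unfolding stacked_def by blast
    have "(t, h - 1) \<noteq> p"
    proof
      assume "(t, h - 1) = p"
      then have "h \<le> h - 1"
        using assms(2) sh t(2) by (auto simp: top_piece_def concurrent_sym)
      with \<open>0 < h\<close> show False by simp
    qed
    with t show ?thesis by blast
  qed
  with assms(1) show ?thesis unfolding stacked_def by blast
qed

lemma drop_level_remove_top:
  assumes "stacked H" and "top_piece H (s, l)" and "0 < l"
  shows "drop_level (H - {(s, l)}) s = l"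
proof -
  have fin: "finite H" and sl: "(s, l) \<in> H"
    using assms(1,2) by (auto simp: stacked_def top_piece_def)
  obtain t0 where t0: "(t0, l - 1) \<in> H" "concurrent s t0"
    using assms(1,3) sl unfolding stacked_def by blast
  have "h \<le> l - 1" if th: "(t, h) \<in> H - {(s, l)}" and c: "concurrent s t" for t h
  proof -
    have "h \<le> l" using assms(2) th c by (auto simp: top_piece_def)
    moreover have "h \<noteq> l"
      using assms(1) sl th c unfolding stacked_def by auto
    ultimately show ?thesis by simp
  qed
  moreover have "(t0, l - 1) \<in> H - {(s, l)}" using t0(1) \<open>0 < l\<close> by auto
  ultimately have "drop_level (H - {(s, l)}) s = Suc (l - 1)"
    using fin t0(2) by (intro drop_level_eqI) auto
  with \<open>0 < l\<close> show ?thesis by simp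
qed

lemma top_piece_level_pos:
  assumes "stacked H" and ground: "{p \<in> H. snd p = 0} = {(0, 0)}" and "2 \<le> card H"
    and top: "top_piece H p"
  shows "0 < snd p"
proof (rule ccontr)
  assume "\<not> 0 < snd p"
  then have "p \<in> {p \<in> H. snd p = 0}" using top by (simp add: top_piece_def)
  then have p: "p = (0, 0)" using ground by blast
  have "card (H - {(0, 0)}) \<noteq> 0"
    using \<open>2 \<le> card H\<close> by (simp add: card_Diff_singleton_if)
  then obtain q where q: "q \<in> H" "q \<noteq> (0, 0)" by (metis card.empty ex_in_conv Diff_iff singletonI)
  have "0 < snd q"
  proof (rule ccontr)
    assume "\<not> 0 < snd q"
    with q(1) have "q \<in> {p \<in> H. snd p = 0}" by simp
    with ground q(2) show False by simp
  qed
  then obtain t where t1: "(t, 1) \<in> H"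
    using stacked_level_below[OF assms(1), of "fst q" "snd q" 1] q(1) by auto
  then obtain t' where "(t', 0) \<in> H" "concurrent t t'"
    using assms(1) unfolding stacked_def by (metis diff_self_eq_0 zero_less_one)
  then have "(t', 0) \<in> {p \<in> H. snd p = 0}" by simp
  then have "t' = 0" using ground by simp
  with \<open>concurrent t t'\<close> have "concurrent (fst p) (fst (t, 1::nat))" by (simp add: p concurrent_sym)
  with top t1 have "snd (t, 1::nat) \<le> snd p" unfolding top_piece_def by blast
  with p show False by simp
qed

lemma leftmost_top_remove:
  assumes "finite H" and "top_piece H p" and "fst p = leftmost_top H" and "H - {p} \<noteq> {}"
  shows "fst p \<le> leftmost_top (H - {p}) + 1"
proof -
  obtain q where q: "top_piece (H - {p}) q" and lm: "fst q = leftmost_top (H - {p})"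
    using leftmost_top_attained[OF _ assms(4)] assms(1) by blast
  show ?thesis
  proof (cases "concurrent (fst q) (fst p)")
    case True
    with lm show ?thesis by (simp add: concurrent_def)
  next
    case False
    with q have "top_piece H q" by (auto simp: top_piece_def)
    with assms(1,3) have "fst p \<le> fst q" by (metis leftmost_top_le)
    with lm show ?thesis by simp
  qed
qed

lemma pyramid_of_Cons_top:
  assumes "stacked H" and "top_piece H (int x, l)" and "0 < l"
    and "pyramid_of b = H - {(int x, l)}"
  shows "pyramid_of (x # b) = H"
proof -
  have "drop_level (pyramid_of b) (int x) = l"
    unfolding assms(4) using assms(1-3) by (rule drop_level_remove_top)
  with assms(2,4) show ?thesis by (auto simp: top_piece_def)
qed

lemma pyramid_of_surj:
  assumes "stacked H" and "{p \<in> H. snd p = 0} = {(0, 0)}" and "\<forall>p\<in>H. 0 \<le> fst p"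
  shows "\<exists>b. admissible b \<and> length b = card H \<and> pyramid_of b = H"
  using assms
proof (induction "card H" arbitrary: H rule: less_induct)
  case less
  have fin: "finite H" using less.prems(1) by (simp add: stacked_def)
  have "(0, 0) \<in> H" using less.prems(2) by blast
  show ?case
  proof (cases "card H \<le> 1")
    case True
    with fin \<open>(0, 0) \<in> H\<close> have "H = {(0, 0)}" by (auto simp: card_le_Suc0_iff_eq)
    then show ?thesis by (intro exI[of _ "[0]"]) simp
  next
    case False
    then have "H \<noteq> {}" by auto
    with fin obtain j l where top: "top_piece H (j, l)" and lm: "j = leftmost_top H"
      by (metis leftmost_top_attained prod.collapse)
    have "0 < l" using top_piece_level_pos[OF less.prems(1,2) _ top] False by simp
    define H0 where "H0 = H - {(j, l)}"
    have jl: "(j, l) \<in> H" using top by (simp add: top_piece_def)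
    have card0: "card H0 = card H - 1" using fin jl by (simp add: H0_def)
    with False have "H0 \<noteq> {}" by auto
    have "stacked H0" unfolding H0_def using less.prems(1) top by (rule stacked_remove_top)
    moreover have "{p \<in> H0. snd p = 0} = {p \<in> H. snd p = 0}"
      using \<open>0 < l\<close> by (auto simp: H0_def)
    with less.prems(2) have "{p \<in> H0. snd p = 0} = {(0, 0)}" by simp
    moreover have "\<forall>p\<in>H0. 0 \<le> fst p" using less.prems(3) by (simp add: H0_def)
    ultimately obtain b where b: "admissible b" "length b = card H0" "pyramid_of b = H0"
      using less.hyps[of H0] card0 False by auto
    then obtain y r where b_eq: "b = y # r" by (cases b) auto
    have "0 \<le> j" using less.prems(3) jl by auto
    then obtain x where x: "j = int x" by (metis nonneg_eq_int)
    have "j \<le> leftmost_top H0 + 1"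
      using leftmost_top_remove[OF fin top] lm \<open>H0 \<noteq> {}\<close> by (simp add: H0_def)
    moreover have "leftmost_top H0 = int y"
      using leftmost_top_pyramid_of[OF b(1)] b(3) b_eq by simp
    ultimately have "admissible (x # b)" using b(1) b_eq x by simp
    moreover have "pyramid_of (x # b) = H"
      using less.prems(1) top[unfolded x] \<open>0 < l\<close> b(3)[unfolded H0_def x]
      by (rule pyramid_of_Cons_top)
    moreover have "length (x # b) = card H"
      using b(2) card0 False by simp
    ultimately show ?thesis by blast
  qed
qed

lemma bij_betw_pyramid_of:
  "bij_betw pyramid_of {b. admissible b \<and> length b = m} {H. right_0_pyramid H \<and> card H = m}"
proof (rule bij_betw_imageI)
  show "inj_on pyramid_of {b. admissible b \<and> length b = m}"
    using inj_on_pyramid_of by (rule inj_on_subset) blast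
  have "\<exists>b. admissible b \<and> length b = card H \<and> pyramid_of b = H" if "right_0_pyramid H" for H
  proof -
    have "heap H" and ground1: "card {p \<in> H. snd p = 0} = 1" and "(0, 0) \<in> H"
      and nonneg: "\<forall>p\<in>H. 0 \<le> fst p"
      using that by (auto simp: right_0_pyramid_def pyramid_def)
    obtain a where a: "{p \<in> H. snd p = 0} = {a}" using ground1 by (rule card_1_singletonE)
    have "(0, 0) \<in> {p \<in> H. snd p = 0}" using \<open>(0, 0) \<in> H\<close> by simp
    with a have "{p \<in> H. snd p = 0} = {(0, 0)}" by simp
    with heap_stacked[OF \<open>heap H\<close>] nonneg show ?thesis by (intro pyramid_of_surj)
  qed
  then show "pyramid_of ` {b. admissible b \<and> length b = m} = {H. right_0_pyramid H \<and> card H = m}"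
    using right_0_pyramid_pyramid_of card_pyramid_of by (auto simp: image_iff)
qed

theorem lemma2:
  fixes m :: nat
  assumes "m \<ge> 1"
  shows "\<exists>f. bij_betw f {xs. positive_string m xs}
                         {H. right_0_pyramid H \<and> card H = m}"
  using bij_betw_trans[OF bij_betw_inv_into[OF bij_betw_dyck_of[OF assms]] bij_betw_pyramid_of]
  by blast

end
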